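(* Let $L>0$. There exist a probability density $q$ on $\mathbb R^p\times(0,\infty)\times(0,\infty)^p\times(0,\infty)$ and a constant $\varepsilon>0$ such that for every $\tilde\lambda^2\in[1/L,L]^p$, $$p(\beta,\sigma^2,\nu,\tau^2\mid\tilde\lambda^2)\ge\varepsilon\,q(\beta,\sigma^2,\nu,\tau^2)$$ for all $(\beta,\sigma^2,\nu,\tau^2)$, where $p(\cdot\mid\tilde\lambda^2)$ is the joint density of the output $(\beta,\sigma^2,\nu,\tau^2)$ of step (1) of Algorithm 1 given $\tilde\lambda^2$.
   Context: Let $n,p\ge 1$, $y\in\mathbb R^n$, $X\in\mathbb R^{n\times p}$ with $X^\top X$ invertible, $a',b'>0$, and $a,b,c>0$. Let $\pi_\tau(t)=t^{a-1}(c+t)^{-(a+b)}/C(a,b,c)$ for $t>0$, where $C(a,b,c)=\int_0^\infty t^{a-1}(c+t)^{-(a+b)}\,dt$. $\mathrm{IG}(\alpha,\beta)$ denotes the inverse gamma distribution with density $\beta^\alpha x^{-\alpha-1}e^{-\beta/x}/\Gamma(\alpha)$, $x>0$. For $v\in(0,\infty)^p$ put $\Psi(v)=\mathrm{diag}(1/v_1,\dots,1/v_p)$. Algorithm 1 is the Markov chain with state $(\beta,\sigma^2,\tilde\lambda^2,\tau^2,\nu)\in\mathbb R^p\times(0,\infty)\times(0,\infty)^p\times(0,\infty)\times(0,\infty)^p$. One iteration, given the current $\tilde\lambda^2$ and with $\Psi=\Psi(\tilde\lambda^2)$, does: (1) draw $\sigma^2\sim\mathrm{IG}\big(n/2+a',\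 \{\|y\|^2-y^\top X(X^\top X+\Psi)^{-1}X^\top y\}/2+b'\big)$, then $\beta\sim N_p\big((X^\top X+\Psi)^{-1}X^\top y,\ \sigma^2(X^\top X+\Psi)^{-1}\big)$; independently draw $\tau^2$ from the density on $(0,\infty)$ proportional to $t\mapsto \pi_\tau(t)\prod_{k=1}^p t^{1/2}/(\tilde\lambda_k^2+t)$, and then, independently for $k=1,\dots,p$, $\nu_k\sim\mathrm{IG}(1,\,1+\tau^2/\tilde\lambda_k^2)$; (2) independently for $k=1,\dots,p$, draw the new $\tilde\lambda_k^2\sim \mathrm{IG}\big(1,\ \beta_k^2/(2\sigma^2)+\tau^2/\nu_k\big)$. *)

theory Defs
  imports "HOL-Analysis.Analysis"
begin

definition ig_density :: "real \<Rightarrow> real \<Rightarrow> real \<Rightarrow> real" where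
  "ig_density \<alpha> \<beta> x =
     (if 0 < x then \<beta> powr \<alpha> * x powr (- \<alpha> - 1) * exp (- \<beta> / x) / Gamma \<alpha> else 0)"

definition mvn_density :: "real^'p \<Rightarrow> real^'p^'p \<Rightarrow> real^'p \<Rightarrow> real" where
  "mvn_density m S x =
     (2 * pi) powr (- real CARD('p) / 2) * det S powr (- 1 / 2)
     * exp (- ((x - m) \<bullet> (matrix_inv S *v (x - m))) / 2)"

definition Psi :: "real^'p \<Rightarrow> real^'p^'p" where
  "Psi v = (\<chi> i j. if i = j then 1 / v $ i else 0)"

definition C_const :: "real \<Rightarrow> real \<Rightarrow> real \<Rightarrow> real" where
  "C_const a b c = (LINT t:{0<..}|lborel. t powr (a - 1) * (c + t) powr (- (a + b)))"

definition pi_tau :: "real \<Rightarrow> real \<Rightarrow> real \<Rightarrow> real \<Rightarrow> real" where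
  "pi_tau a b c t = t powr (a - 1) * (c + t) powr (- (a + b)) / C_const a b c"

definition tau_unnorm :: "real \<Rightarrow> real \<Rightarrow> real \<Rightarrow> real^'p \<Rightarrow> real \<Rightarrow> real" where
  "tau_unnorm a b c lam t = pi_tau a b c t * (\<Prod>k\<in>UNIV. t powr (1/2) / (lam $ k + t))"

definition tau_density :: "real \<Rightarrow> real \<Rightarrow> real \<Rightarrow> real^'p \<Rightarrow> real \<Rightarrow> real" where
  "tau_density a b c lam t =
     (if 0 < t then tau_unnorm a b c lam t / (LINT s:{0<..}|lborel. tau_unnorm a b c lam s) else 0)"

definition post_mean :: "real^'n \<Rightarrow> real^'p^'n \<Rightarrow> real^'p \<Rightarrow> real^'p" where
  "post_mean y X lam = matrix_inv (transpose X ** X + Psi lam) *v (transpose X *v y)"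

definition sigma_rate :: "real^'n \<Rightarrow> real^'p^'n \<Rightarrow> real \<Rightarrow> real^'p \<Rightarrow> real" where
  "sigma_rate y X b' lam = (y \<bullet> y - y \<bullet> (X *v post_mean y X lam)) / 2 + b'"

definition step1_dens ::
  "real^'n \<Rightarrow> real^'p^'n \<Rightarrow> real \<Rightarrow> real \<Rightarrow> real \<Rightarrow> real \<Rightarrow> real \<Rightarrow> real^'p
   \<Rightarrow> real^'p \<Rightarrow> real \<Rightarrow> real^'p \<Rightarrow> real \<Rightarrow> real" where
  "step1_dens y X a' b' a b c lam \<beta> s \<nu> t =
       ig_density (real CARD('n) / 2 + a') (sigma_rate y X b' lam) s
       * (if 0 < s then mvn_density (post_mean y X lam)
                          (s *\<^sub>R matrix_inv (transpose X ** X + Psi lam)) \<beta> else 0)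
       * tau_density a b c lam t
       * (\<Prod>k\<in>UNIV. ig_density 1 (1 + t / lam $ k) (\<nu> $ k))"

definition step1_density ::
  "real^'n \<Rightarrow> real^'p^'n \<Rightarrow> real \<Rightarrow> real \<Rightarrow> real \<Rightarrow> real \<Rightarrow> real \<Rightarrow> real^'p
   \<Rightarrow> ((real^'p) \<times> real \<times> (real^'p) \<times> real) \<Rightarrow> real" where
  "step1_density y X a' b' a b c lam z =
     step1_dens y X a' b' a b c lam (fst z) (fst (snd z)) (fst (snd (snd z))) (snd (snd (snd z)))"

definition state_domain :: "((real^'p) \<times> real \<times> (real^'p) \<times> real) set" where
  "state_domain = {(\<beta>, s, \<nu>, t). 0 < s \<and> (\<forall>k. 0 < \<nu> $ k) \<and> 0 < t}"

definition is_prob_density :: "((real^'p) \<times> real \<times> (real^'p) \<times> real \<Rightarrow> real) \<Rightarrow> bool" where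
  "is_prob_density q \<longleftrightarrow> q \<in> borel_measurable lborel \<and> (\<forall>z. 0 \<le> q z)
     \<and> (\<forall>z. z \<notin> state_domain \<longrightarrow> q z = 0)
     \<and> (\<integral>\<^sup>+ z. ennreal (q z) \<partial>lborel) = 1"

end

theory Submission
  imports Defs
begin

text \<open>The minorising density is the uniform density of a unit cube on which all four
  factors of the step-(1) density are bounded below uniformly in \<open>\<lambda>\<^sup>2 \<in> [1/L, L]\<^sup>p\<close>.
  For the normal factor this needs \<open>det (X\<^sup>TX + \<Psi>)\<close> bounded away from zero (a continuous
  positive function on a compact box) and the centred quadratic form bounded above, which
  follows from \<open>y\<^sup>Ty - y\<^sup>TX\<mu> = \<parallel>y - X\<mu>\<parallel>\<^sup>2 + \<mu>\<^sup>T\<Psi>\<mu> \<ge> 0\<close> for the posterior mean \<open>\<mu>\<close>; the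
  same identity bounds the inverse gamma rate of \<open>\<sigma>\<^sup>2\<close> between \<open>b'\<close> and \<open>\<parallel>y\<parallel>\<^sup>2/2 + b'\<close>.
  For \<open>\<tau>\<^sup>2\<close> the unnormalised density is comparable, uniformly in \<open>\<lambda>\<^sup>2\<close>, to the integrable
  prior kernel, so its normaliser is bounded above.\<close>

lemma transpose_add: "transpose (A + B) = transpose A + transpose (B :: 'a::semiring_1^'n^'m)"
  by (simp add: transpose_def vec_eq_iff)

lemma det_scaleR: "det (c *\<^sub>R (A :: real^'n^'n)) = c ^ CARD('n) * det A"
  by (simp add: det_def prod.distrib sum_distrib_left algebra_simps)

lemma continuous_on_det:
  assumes "\<And>i j. continuous_on S (\<lambda>x. M x $ i $ j :: real)"
  shows "continuous_on S (\<lambda>x. det (M x :: real^'n^'n))"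
  unfolding det_def by (intro continuous_intros assms)

lemma matrix_inv_right:
  assumes "invertible (A :: 'a::semiring_1^'n^'n)"
  shows "A ** matrix_inv A = mat 1"
  using assms someI_ex[of "\<lambda>B. A ** B = mat 1 \<and> B ** A = mat 1"]
  unfolding invertible_def matrix_inv_def by blast

lemma matrix_inv_left:
  assumes "invertible (A :: 'a::semiring_1^'n^'n)"
  shows "matrix_inv A ** A = mat 1"
  using assms someI_ex[of "\<lambda>B. A ** B = mat 1 \<and> B ** A = mat 1"]
  unfolding invertible_def matrix_inv_def by blast

lemma matrix_inv_unique:
  assumes "(A :: real^'n^'n) ** B = mat 1"
  shows "matrix_inv A = B"
proof -
  have "invertible A" using assms invertible_right_inverse by blast
  then have "matrix_inv A = matrix_inv A ** (A ** B)" using assms by simp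
  also have "\<dots> = B" by (simp add: matrix_mul_assoc matrix_inv_left \<open>invertible A\<close>)
  finally show ?thesis .
qed

lemma inner_matrix_symmetric:
  assumes "transpose A = (A :: real^'n^'n)"
  shows "u \<bullet> (A *v v) = v \<bullet> (A *v u)"
  by (metis assms dot_lmul_matrix inner_commute vector_transpose_matrix)

lemma invertible_if_pos_definite:
  assumes "\<And>x. x \<noteq> 0 \<Longrightarrow> 0 < x \<bullet> ((A :: real^'n^'n) *v x)"
  shows "invertible A"
proof -
  have "\<forall>x. A *v x = 0 \<longrightarrow> x = 0" using assms by force
  then show ?thesis unfolding invertible_left_inverse matrix_left_invertible_ker .
qed

text \<open>The segment from the identity to \<open>A\<close> consists of positive definite, hence
  invertible, matrices; so \<open>det\<close> never vanishes on it and keeps the sign of \<open>det (mat 1)\<close>.\<close>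
lemma det_pos_if_pos_definite:
  assumes pd: "\<And>x. x \<noteq> 0 \<Longrightarrow> 0 < x \<bullet> ((A :: real^'n^'n) *v x)"
  shows "0 < det A"
proof (rule ccontr)
  define M where "M t = (1 - t) *\<^sub>R mat 1 + t *\<^sub>R A" for t :: real
  have det_M_nonzero: "det (M t) \<noteq> 0" if "0 \<le> t" "t \<le> 1" for t
  proof -
    have "0 < x \<bullet> (M t *v x)" if "x \<noteq> 0" for x
    proof -
      have "x \<bullet> (M t *v x) = (1 - t) * (x \<bullet> x) + t * (x \<bullet> (A *v x))"
        by (simp add: M_def matrix_vector_mult_add_rdistrib inner_add_right
            flip: scaleR_matrix_vector_assoc)
      moreover have "0 < x \<bullet> x" "0 < x \<bullet> (A *v x)" using \<open>x \<noteq> 0\<close> pd by auto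
      ultimately show ?thesis
        using \<open>0 \<le> t\<close> \<open>t \<le> 1\<close> by (cases "t = 1") (auto intro: add_pos_nonneg)
    qed
    then show ?thesis by (metis invertible_if_pos_definite invertible_det_nz)
  qed
  have "continuous_on {0..1} (\<lambda>t. det (M t))"
    by (rule continuous_on_det) (simp add: M_def, intro continuous_intros)
  moreover assume "\<not> 0 < det A"
  then have "det (M 1) \<le> 0" "0 \<le> det (M 0)" by (simp_all add: M_def)
  ultimately obtain t where "0 \<le> t" "t \<le> 1" "det (M t) = 0"
    using IVT2'[of "\<lambda>t. det (M t)" 1 0 0] by auto
  with det_M_nonzero show False by blast
qed

lemma quadratic_form_diff_le:
  assumes "transpose A = (A :: real^'n^'n)" and "\<And>x. 0 \<le> x \<bullet> (A *v x)"
  shows "(u - v) \<bullet> (A *v (u - v)) \<le> 2 * (u \<bullet> (A *v u)) + 2 * (v \<bullet> (A *v v))"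
proof -
  have "(u + v) \<bullet> (A *v (u + v)) + (u - v) \<bullet> (A *v (u - v))
      = 2 * (u \<bullet> (A *v u)) + 2 * (v \<bullet> (A *v v))"
    by (simp add: matrix_vector_right_distrib matrix_vector_mult_diff_distrib inner_add_left
        inner_add_right inner_diff_left inner_diff_right inner_matrix_symmetric[OF assms(1), of v u])
  with assms(2)[of "u + v"] show ?thesis by linarith
qed

subsection \<open>The posterior precision matrix\<close>

abbreviation precision :: "real^'p^'n \<Rightarrow> real^'p \<Rightarrow> real^'p^'p" where
  "precision X lam \<equiv> transpose X ** X + Psi lam"

lemma Psi_mult_vector: "Psi lam *v x = (\<chi> k. x $ k / lam $ k)"
proof -
  have "(\<Sum>j\<in>UNIV. (if k = j then 1 / lam $ k else 0) * x $ j) = x $ k / lam $ k" for k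
    by (simp add: if_distrib[of "\<lambda>c. c * _"] cong: if_cong)
  then show ?thesis by (simp add: Psi_def matrix_vector_mult_def vec_eq_iff)
qed

lemma transpose_precision: "transpose (precision X lam) = precision X lam"
proof -
  have "transpose (Psi lam) = Psi lam" by (simp add: Psi_def transpose_def vec_eq_iff)
  then show ?thesis by (simp add: transpose_add matrix_transpose_mul)
qed

lemma inner_precision:
  "x \<bullet> (precision X lam *v x) = (X *v x) \<bullet> (X *v x) + (\<Sum>k\<in>UNIV. (x $ k)\<^sup>2 / lam $ k)"
proof -
  have "x \<bullet> ((transpose X ** X) *v x) = (X *v x) \<bullet> (X *v x)"
    by (metis dot_lmul_matrix matrix_vector_mul_assoc transpose_matrix_vector inner_commute)
  moreover have "x \<bullet> (Psi lam *v x) = (\<Sum>k\<in>UNIV. (x $ k)\<^sup>2 / lam $ k)"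
    by (simp add: Psi_mult_vector inner_vec_def power2_eq_square)
  ultimately show ?thesis by (simp add: matrix_vector_mult_add_rdistrib inner_add_right)
qed

lemma inner_precision_pos:
  assumes "\<forall>k. 0 < lam $ k" and "x \<noteq> 0"
  shows "0 < x \<bullet> (precision X lam *v x)"
proof -
  obtain k where "x $ k \<noteq> 0" using assms(2) by (auto simp: vec_eq_iff)
  then have "0 < (x $ k)\<^sup>2 / lam $ k" using assms(1) by simp
  also have "\<dots> \<le> (\<Sum>k\<in>UNIV. (x $ k)\<^sup>2 / lam $ k)"
    by (rule member_le_sum) (use assms(1) in \<open>auto intro: divide_nonneg_pos\<close>)
  finally show ?thesis unfolding inner_precision by (simp add: add_nonneg_pos)
qed

lemma inner_precision_nonneg:
  assumes "\<forall>k. 0 < lam $ k"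
  shows "0 \<le> x \<bullet> (precision X lam *v x)"
  using inner_precision_pos[OF assms, of x X] by (cases "x = 0") auto

lemma invertible_precision: "\<forall>k. 0 < lam $ k \<Longrightarrow> invertible (precision X lam)"
  by (rule invertible_if_pos_definite) (rule inner_precision_pos)

lemma det_precision_uniform_lower:
  assumes "compact K" and pos: "\<And>lam. lam \<in> K \<Longrightarrow> \<forall>k. 0 < lam $ k"
  shows "\<exists>\<delta>>0. \<forall>lam\<in>K. \<delta> \<le> det (precision (X :: real^'p^'n) lam)"
proof (cases "K = {}")
  case False
  have "continuous_on K (\<lambda>lam. det (precision X lam))"
  proof (rule continuous_on_det)
    show "continuous_on K (\<lambda>lam. precision X lam $ i $ j)" for i j
      using pos by (cases "i = j") (auto simp: Psi_def less_imp_neq[symmetric] intro!: continuous_intros)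
  qed
  then obtain l where "l \<in> K" "\<forall>lam\<in>K. det (precision X l) \<le> det (precision X lam)"
    using continuous_attains_inf[OF \<open>compact K\<close> False] by blast
  moreover have "0 < det (precision X l)"
    by (rule det_pos_if_pos_definite, rule inner_precision_pos) (use pos \<open>l \<in> K\<close> in auto)
  ultimately show ?thesis by blast
qed (auto intro: exI[of _ 1])

lemma mem_lambda_box_pos:
  "0 < L \<Longrightarrow> lam \<in> cbox (\<chi> k. 1 / L) (\<chi> k. (L :: real)) \<Longrightarrow> \<forall>k. 0 < lam $ k"
  by (auto simp: mem_box_cart intro: less_le_trans[of 0 "1 / L"])

subsection \<open>The posterior mean and the rate of \<open>\<sigma>\<^sup>2\<close>\<close>

lemma precision_post_mean:
  "\<forall>k. 0 < lam $ k \<Longrightarrow> precision X lam *v post_mean y X lam = transpose X *v y"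
  unfolding post_mean_def
  by (simp add: matrix_vector_mul_assoc matrix_inv_right invertible_precision)

lemma inner_y_X_post_mean:
  assumes "\<forall>k. 0 < lam $ k"
  shows "y \<bullet> (X *v post_mean y X lam) = post_mean y X lam \<bullet> (precision X lam *v post_mean y X lam)"
  by (simp add: precision_post_mean[OF assms] dot_lmul_matrix inner_commute)

lemma inner_y_X_post_mean_bounds:
  assumes lam: "\<forall>k. 0 < lam $ k"
  shows "0 \<le> y \<bullet> (X *v post_mean y X lam)" and "y \<bullet> (X *v post_mean y X lam) \<le> y \<bullet> y"
proof -
  let ?m = "post_mean y X lam"
  show "0 \<le> y \<bullet> (X *v ?m)"
    unfolding inner_y_X_post_mean[OF lam] by (rule inner_precision_nonneg[OF lam])
  have "y \<bullet> y - y \<bullet> (X *v ?m) = (y - X *v ?m) \<bullet> (y - X *v ?m) + (\<Sum>k\<in>UNIV. (?m $ k)\<^sup>2 / lam $ k)"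
    by (simp add: inner_y_X_post_mean[OF lam] inner_precision inner_diff_left inner_diff_right
        inner_commute)
  moreover have "0 \<le> (\<Sum>k\<in>UNIV. (?m $ k)\<^sup>2 / lam $ k)"
    by (intro sum_nonneg divide_nonneg_pos) (simp_all add: lam)
  ultimately show "y \<bullet> (X *v ?m) \<le> y \<bullet> y" using inner_ge_zero[of "y - X *v ?m"] by linarith
qed

lemma sigma_rate_bounds:
  assumes "\<forall>k. 0 < lam $ k"
  shows "b' \<le> sigma_rate y X b' lam" and "sigma_rate y X b' lam \<le> y \<bullet> y / 2 + b'"
  using inner_y_X_post_mean_bounds[OF assms, of y X] unfolding sigma_rate_def by auto

subsection \<open>The normal factor\<close>

lemma mvn_density_nonneg: "0 \<le> mvn_density m S x"
  unfolding mvn_density_def by simp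

lemma mvn_density_scaled_inverse:
  fixes A :: "real^'p^'p"
  assumes "invertible A" and "0 < s"
  shows "mvn_density m (s *\<^sub>R matrix_inv A) x =
    (2 * pi) powr (- real CARD('p) / 2) * (s ^ CARD('p) / det A) powr (- 1 / 2)
    * exp (- ((x - m) \<bullet> (A *v (x - m))) / (2 * s))"
proof -
  have "matrix_inv (s *\<^sub>R matrix_inv A) = (1 / s) *\<^sub>R A"
    by (rule matrix_inv_unique)
       (use assms in \<open>simp add: matrix_scalar_ac scalar_matrix_assoc matrix_inv_left\<close>)
  moreover have "det (matrix_inv A) * det A = 1"
    by (metis assms(1) det_I det_mul matrix_inv_left)
  then have "det (s *\<^sub>R matrix_inv A) = s ^ CARD('p) / det A"
    by (auto simp: det_scaleR eq_divide_eq)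
  ultimately show ?thesis
    by (simp add: mvn_density_def flip: scaleR_matrix_vector_assoc)
qed

lemma inner_precision_unit_cube_le:
  fixes X :: "real^'p^'n"
  assumes "0 < L"
  shows "\<exists>C. \<forall>lam \<in> cbox (\<chi> k. 1 / L) (\<chi> k. L). \<forall>\<beta> \<in> cbox 0 (\<chi> k. 1).
    \<beta> \<bullet> (precision X lam *v \<beta>) \<le> C"
proof -
  obtain K where K: "K > 0" "\<And>x. norm (X *v x) \<le> norm x * K"
    using bounded_linear.pos_bounded[OF matrix_vector_mul_bounded_linear[of X]] by blast
  define P where "P = real CARD('p)"
  have "\<beta> \<bullet> (precision X lam *v \<beta>) \<le> (P * K)\<^sup>2 + P * L"
    if lam: "lam \<in> cbox (\<chi> k. 1 / L) (\<chi> k. L)" and \<beta>: "\<beta> \<in> cbox 0 (\<chi> k. 1)"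
    for lam \<beta> :: "real^'p"
  proof -
    have \<beta>_k: "0 \<le> \<beta> $ k \<and> \<beta> $ k \<le> 1" for k using \<beta> by (simp add: mem_box_cart)
    have "norm \<beta> \<le> (\<Sum>k\<in>UNIV. \<bar>\<beta> $ k\<bar>)" by (rule norm_le_l1_cart)
    also have "\<dots> \<le> P" using \<beta>_k sum_mono[of UNIV "\<lambda>k. \<bar>\<beta> $ k\<bar>" "\<lambda>k. 1"] by (simp add: P_def)
    finally have "norm (X *v \<beta>) \<le> P * K"
      using K by (metis mult_right_mono order_trans less_imp_le)
    then have "(X *v \<beta>) \<bullet> (X *v \<beta>) \<le> (P * K)\<^sup>2"
      by (metis norm_ge_zero power2_norm_eq_inner power_mono)
    moreover have "(\<beta> $ k)\<^sup>2 / lam $ k \<le> L" for k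
    proof -
      have "0 < lam $ k" "1 / L \<le> lam $ k"
        using lam mem_lambda_box_pos[OF assms lam] by (auto simp: mem_box_cart)
      moreover have "(\<beta> $ k)\<^sup>2 \<le> 1" using \<beta>_k by (simp add: power_le_one)
      ultimately have "(\<beta> $ k)\<^sup>2 / lam $ k \<le> 1 / (1 / L)"
        by (intro frac_le) (use assms in auto)
      then show ?thesis by simp
    qed
    then have "(\<Sum>k\<in>UNIV. (\<beta> $ k)\<^sup>2 / lam $ k) \<le> P * L"
      using sum_mono[of UNIV "\<lambda>k. (\<beta> $ k)\<^sup>2 / lam $ k" "\<lambda>k. L"] by (simp add: P_def)
    ultimately show ?thesis unfolding inner_precision by linarith
  qed
  then show ?thesis by blast
qed

lemma inner_precision_centred_le:
  assumes "\<forall>k. 0 < lam $ k"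
  shows "(\<beta> - post_mean y X lam) \<bullet> (precision X lam *v (\<beta> - post_mean y X lam))
    \<le> 2 * (\<beta> \<bullet> (precision X lam *v \<beta>)) + 2 * (y \<bullet> y)"
proof -
  let ?A = "precision X lam" and ?m = "post_mean y X lam"
  have "(\<beta> - ?m) \<bullet> (?A *v (\<beta> - ?m)) \<le> 2 * (\<beta> \<bullet> (?A *v \<beta>)) + 2 * (?m \<bullet> (?A *v ?m))"
    by (intro quadratic_form_diff_le transpose_precision inner_precision_nonneg assms)
  moreover have "?m \<bullet> (?A *v ?m) \<le> y \<bullet> y"
    using inner_y_X_post_mean_bounds(2)[OF assms, of y X] by (simp add: inner_y_X_post_mean[OF assms])
  ultimately show ?thesis by linarith
qed

lemma mvn_density_uniform_lower:
  fixes X :: "real^'p^'n"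
  assumes "0 < L"
  shows "\<exists>K>0. \<forall>lam \<in> cbox (\<chi> k. 1 / L) (\<chi> k. L). \<forall>\<beta> \<in> cbox 0 (\<chi> k. 1). \<forall>s\<in>{1..2}.
    K \<le> mvn_density (post_mean y X lam) (s *\<^sub>R matrix_inv (precision X lam)) \<beta>"
proof -
  let ?box = "cbox (\<chi> k. 1 / L) (\<chi> k. L) :: (real^'p) set"
  obtain \<delta> where \<delta>: "\<delta> > 0" "\<forall>lam\<in>?box. \<delta> \<le> det (precision X lam)"
    using det_precision_uniform_lower[OF compact_cbox mem_lambda_box_pos[OF assms]] by blast
  obtain C where C: "\<forall>lam\<in>?box. \<forall>\<beta>\<in>cbox 0 (\<chi> k. 1). \<beta> \<bullet> (precision X lam *v \<beta>) \<le> C"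
    using inner_precision_unit_cube_le[OF assms] by blast
  define Q where "Q = 2 * C + 2 * (y \<bullet> y)"
  define K where "K = (2 * pi) powr (- real CARD('p) / 2) * (2 ^ CARD('p) / \<delta>) powr (- 1 / 2)
    * exp (- Q / 2)"
  have "K \<le> mvn_density (post_mean y X lam) (s *\<^sub>R matrix_inv (precision X lam)) \<beta>"
    if lam: "lam \<in> ?box" and \<beta>: "\<beta> \<in> cbox 0 (\<chi> k. 1)" and s: "s \<in> {1..2}" for lam \<beta> s
  proof -
    let ?A = "precision X lam" and ?m = "post_mean y X lam"
    have pos: "\<forall>k. 0 < lam $ k" using mem_lambda_box_pos[OF assms lam] by blast
    have "s ^ CARD('p) / det ?A \<le> 2 ^ CARD('p) / \<delta>"
      using s \<delta> lam by (intro frac_le power_mono) auto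
    then have det_part: "(2 ^ CARD('p) / \<delta>) powr (- 1 / 2) \<le> (s ^ CARD('p) / det ?A) powr (- 1 / 2)"
      using s \<delta> lam by (intro powr_mono2') auto
    define q where "q = (\<beta> - ?m) \<bullet> (?A *v (\<beta> - ?m))"
    have "q \<le> Q"
      using inner_precision_centred_le[OF pos, of \<beta> y X] C lam \<beta> unfolding q_def Q_def by fastforce
    moreover have "q / s \<le> q"
      using s inner_precision_nonneg[OF pos, of "\<beta> - ?m" X]
      by (simp add: q_def divide_le_eq mult_le_cancel_left1)
    ultimately have "q / s \<le> Q" by linarith
    then have exp_part: "exp (- Q / 2) \<le> exp (- q / (2 * s))" by simp
    have "K \<le> (2 * pi) powr (- real CARD('p) / 2) * (s ^ CARD('p) / det ?A) powr (- 1 / 2)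
        * exp (- q / (2 * s))"
      unfolding K_def by (intro mult_mono det_part exp_part order.refl) auto
    then show ?thesis
      using s by (simp add: mvn_density_scaled_inverse invertible_precision[OF pos] q_def)
  qed
  moreover have "K > 0" unfolding K_def using \<delta> by simp
  ultimately show ?thesis by blast
qed

subsection \<open>The factor of \<open>\<tau>\<^sup>2\<close>\<close>

lemma set_integrable_continuous_dominated:
  fixes f g :: "real \<Rightarrow> real"
  assumes "S \<in> sets borel" and "continuous_on S f" and "g integrable_on S"
    and "\<And>x. x \<in> S \<Longrightarrow> \<bar>f x\<bar> \<le> g x"
  shows "set_integrable lborel S f"
proof -
  have "f absolutely_integrable_on S"
    by (rule measurable_bounded_by_integrable_imp_absolutely_integrable
          [OF continuous_imp_measurable_on_sets_lebesgue[OF assms(2)] _ assms(3)])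
       (use assms in auto)
  moreover have "(\<lambda>x. indicator S x *\<^sub>R f x) \<in> borel_measurable lborel"
    using borel_measurable_continuous_on_indicator[OF assms(1,2)] by simp
  ultimately show ?thesis unfolding set_integrable_def using integrable_completion by blast
qed

lemma set_integral_Ioi_ge:
  fixes g :: "real \<Rightarrow> real"
  assumes "set_integrable lborel {0<..} g" and "\<And>t. 0 < t \<Longrightarrow> 0 \<le> g t"
    and "\<And>t. t \<in> {1..2} \<Longrightarrow> m \<le> g t"
  shows "m \<le> (LINT t:{0<..}|lborel. g t)"
proof -
  have g_1_2: "set_integrable lborel {1..2} g"
    by (rule set_integrable_subset[OF assms(1)]) auto
  have "m = (LINT t:{1..2::real}|lborel. m)" by (simp add: set_integral_const)
  also have "\<dots> \<le> (LINT t:{1..2}|lborel. g t)"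
    by (rule set_integral_mono) (use g_1_2 assms(3) in \<open>auto simp: set_integrable_def\<close>)
  also have "\<dots> \<le> (LINT t:{0<..}|lborel. g t)"
    unfolding set_lebesgue_integral_def
    by (rule integral_mono) (use g_1_2 assms in \<open>auto simp: set_integrable_def indicator_def\<close>)
  finally show ?thesis .
qed

definition tau_prior_kernel :: "real \<Rightarrow> real \<Rightarrow> real \<Rightarrow> real \<Rightarrow> real" where
  "tau_prior_kernel a b c t = t powr (a - 1) * (c + t) powr (- (a + b))"

lemma tau_prior_kernel_nonneg: "0 \<le> tau_prior_kernel a b c t"
  unfolding tau_prior_kernel_def by simp

lemma tau_prior_kernel_integrable:
  assumes "0 < a" and "0 < b" and "0 < c"
  shows "set_integrable lborel {0<..} (tau_prior_kernel a b c)"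
proof -
  have "set_integrable lborel {0<..1} (tau_prior_kernel a b c)"
  proof (rule set_integrable_continuous_dominated)
    show "continuous_on {0<..1} (tau_prior_kernel a b c)"
      unfolding tau_prior_kernel_def using assms by (intro continuous_intros) auto
    show "(\<lambda>t. of_real (c powr (- (a + b))) * t powr (a - 1)) integrable_on {0<..1}"
      by (intro integrable_on_cmult_left integrable_on_powr_from_0') (use assms in auto)
    fix t :: real assume "t \<in> {0<..1}"
    then have "(c + t) powr (- (a + b)) \<le> c powr (- (a + b))"
      using assms by (intro powr_mono2') auto
    then show "\<bar>tau_prior_kernel a b c t\<bar> \<le> of_real (c powr (- (a + b))) * t powr (a - 1)"
      unfolding tau_prior_kernel_def by (simp add: mult.commute mult_left_mono)
  qed simp
  moreover have "set_integrable lborel {1..} (tau_prior_kernel a b c)"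
  proof (rule set_integrable_continuous_dominated)
    show "continuous_on {1..} (tau_prior_kernel a b c)"
      unfolding tau_prior_kernel_def using assms by (intro continuous_intros) auto
    show "(\<lambda>t. t powr (- 1 - b)) integrable_on {1..}"
      using has_integral_powr_to_inf[of "- 1 - b" 1] assms unfolding integrable_on_def by auto
    fix t :: real assume "t \<in> {1..}"
    then have "t powr (a - 1) * (c + t) powr (- (a + b)) \<le> t powr (a - 1) * t powr (- (a + b))"
      using assms by (intro mult_left_mono powr_mono2') auto
    also have "\<dots> = t powr (- 1 - b)" by (simp flip: powr_add)
    finally show "\<bar>tau_prior_kernel a b c t\<bar> \<le> t powr (- 1 - b)"
      unfolding tau_prior_kernel_def by simp
  qed simp
  ultimately have "set_integrable lborel ({0<..1} \<union> {1..}) (tau_prior_kernel a b c)"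
    by (rule set_integrable_Un) auto
  moreover have "{0<..1} \<union> {1..} = {0::real<..}" by auto
  ultimately show ?thesis by simp
qed

lemma tau_prior_kernel_ge:
  assumes "0 < a" and "0 < b" and "0 < c" and "t \<in> {1..2}"
  shows "min 1 (2 powr (a - 1)) * (c + 2) powr (- (a + b)) \<le> tau_prior_kernel a b c t"
proof -
  have "min 1 (2 powr (a - 1)) \<le> t powr (a - 1)"
  proof (cases "1 \<le> a")
    case True
    then have "1 powr (a - 1) \<le> t powr (a - 1)" using assms(4) by (intro powr_mono2) auto
    then show ?thesis by simp
  next
    case False
    then have "2 powr (a - 1) \<le> t powr (a - 1)" using assms(4) by (intro powr_mono2') auto
    then show ?thesis by simp
  qed
  moreover have "(c + 2) powr (- (a + b)) \<le> (c + t) powr (- (a + b))"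
    using assms by (intro powr_mono2') auto
  ultimately show ?thesis unfolding tau_prior_kernel_def by (intro mult_mono) auto
qed

lemma C_const_pos:
  assumes "0 < a" and "0 < b" and "0 < c"
  shows "0 < C_const a b c"
proof -
  have "0 < min 1 (2 powr (a - 1)) * (c + 2) powr (- (a + b))" using assms by simp
  also have "\<dots> \<le> C_const a b c"
    unfolding C_const_def tau_prior_kernel_def[symmetric]
    by (rule set_integral_Ioi_ge[OF tau_prior_kernel_integrable[OF assms] tau_prior_kernel_nonneg
          tau_prior_kernel_ge[OF assms]])
  finally show ?thesis .
qed

lemma tau_likelihood_factor_le:
  fixes L l t :: real
  assumes "0 < L" and "1 / L \<le> l" and "0 < t"
  shows "t powr (1 / 2) / (l + t) \<le> max L 1"
proof -
  have "t powr (1 / 2) \<le> 1 + t"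
  proof -
    have "sqrt t \<le> sqrt ((1 + t)\<^sup>2)"
      using assms(3) by (intro real_sqrt_le_mono) (simp add: power2_eq_square algebra_simps)
    then show ?thesis using assms(3) by (simp add: powr_half_sqrt)
  qed
  also have "1 + t \<le> max L 1 * (l + t)"
  proof -
    have "1 \<le> L * l" using assms by (simp add: divide_le_eq mult.commute)
    then have "1 \<le> max L 1 * l"
      using assms by (smt (verit) max.cobounded1 mult_right_mono divide_pos_pos)
    moreover have "t \<le> max L 1 * t" using assms(3) by (simp add: mult_le_cancel_right1)
    ultimately show ?thesis by (simp add: distrib_left)
  qed
  finally show ?thesis
    using assms by (simp add: divide_le_eq mult.commute add_pos_pos less_le_trans[of 0 "1 / L"])
qed

lemma tau_likelihood_le:
  fixes lam :: "real^'p" and L t :: real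
  assumes "0 < L" and "lam \<in> cbox (\<chi> k. 1 / L) (\<chi> k. L)" and "0 < t"
  shows "(\<Prod>k\<in>UNIV. t powr (1 / 2) / (lam $ k + t)) \<le> max L 1 ^ CARD('p)"
proof -
  have "(\<Prod>k\<in>UNIV. t powr (1 / 2) / (lam $ k + t)) \<le> (\<Prod>k\<in>(UNIV :: 'p set). max L 1)"
    using assms mem_lambda_box_pos[OF assms(1,2)]
    by (intro prod_mono conjI tau_likelihood_factor_le) (auto simp: mem_box_cart less_imp_le)
  then show ?thesis by simp
qed

lemma tau_likelihood_ge:
  fixes lam :: "real^'p" and L t :: real
  assumes "0 < L" and "lam \<in> cbox (\<chi> k. 1 / L) (\<chi> k. L)" and "t \<in> {1..2}"
  shows "(1 / (L + 2)) ^ CARD('p) \<le> (\<Prod>k\<in>UNIV. t powr (1 / 2) / (lam $ k + t))"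
proof -
  have "1 / (L + 2) \<le> t powr (1 / 2) / (lam $ k + t)" for k
  proof (rule frac_le)
    have "1 powr (1 / 2) \<le> t powr (1 / 2)" using assms(3) by (intro powr_mono2) auto
    then show "1 \<le> t powr (1 / 2)" by simp
    show "0 < lam $ k + t" using mem_lambda_box_pos[OF assms(1,2)] assms(3) by (simp add: add_pos_pos)
    show "lam $ k + t \<le> L + 2" using assms(2,3) by (simp add: mem_box_cart add_mono)
  qed simp
  then have "(\<Prod>k\<in>(UNIV :: 'p set). 1 / (L + 2)) \<le> (\<Prod>k\<in>UNIV. t powr (1 / 2) / (lam $ k + t))"
    using assms(1) by (intro prod_mono) simp
  then show ?thesis by simp
qed

lemma tau_unnorm_eq:
  "tau_unnorm a b c lam t =
    tau_prior_kernel a b c t / C_const a b c * (\<Prod>k\<in>UNIV. t powr (1 / 2) / (lam $ k + t))"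
  unfolding tau_unnorm_def pi_tau_def tau_prior_kernel_def ..

lemma tau_unnorm_nonneg:
  assumes "0 < a" and "0 < b" and "0 < c" and "\<forall>k. 0 < lam $ k" and "0 < t"
  shows "0 \<le> tau_unnorm a b c lam t"
  unfolding tau_unnorm_eq using assms C_const_pos[OF assms(1-3)] tau_prior_kernel_nonneg
  by (intro mult_nonneg_nonneg divide_nonneg_pos prod_nonneg) (auto simp: add_pos_pos less_imp_le)

lemma tau_unnorm_le:
  fixes lam :: "real^'p"
  assumes "0 < a" and "0 < b" and "0 < c" and "0 < L"
    and "lam \<in> cbox (\<chi> k. 1 / L) (\<chi> k. L)" and "0 < t"
  shows "tau_unnorm a b c lam t \<le> tau_prior_kernel a b c t / C_const a b c * max L 1 ^ CARD('p)"
  unfolding tau_unnorm_eq using C_const_pos[OF assms(1-3)] tau_prior_kernel_nonneg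
  by (intro mult_left_mono tau_likelihood_le[OF assms(4-6)] divide_nonneg_pos) auto

lemma tau_unnorm_ge:
  fixes lam :: "real^'p"
  assumes "0 < a" and "0 < b" and "0 < c" and "0 < L"
    and "lam \<in> cbox (\<chi> k. 1 / L) (\<chi> k. L)" and "t \<in> {1..2}"
  shows "min 1 (2 powr (a - 1)) * (c + 2) powr (- (a + b)) / C_const a b c * (1 / (L + 2)) ^ CARD('p)
    \<le> tau_unnorm a b c lam t"
  unfolding tau_unnorm_eq using assms C_const_pos[OF assms(1-3)]
  by (intro mult_mono divide_right_mono tau_prior_kernel_ge tau_likelihood_ge
      divide_nonneg_pos tau_prior_kernel_nonneg) auto

lemma tau_unnorm_integrable:
  fixes lam :: "real^'p"
  assumes "0 < a" and "0 < b" and "0 < c" and "0 < L" and lam: "lam \<in> cbox (\<chi> k. 1 / L) (\<chi> k. L)"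
  shows "set_integrable lborel {0<..} (tau_unnorm a b c lam)"
proof -
  let ?U = "tau_unnorm a b c lam" and ?g = "\<lambda>t. tau_prior_kernel a b c t / C_const a b c * max L 1 ^ CARD('p)"
  have "continuous_on {0<..} ?U"
    unfolding tau_unnorm_eq tau_prior_kernel_def
    using mem_lambda_box_pos[OF assms(4) lam] assms(3) C_const_pos[OF assms(1-3)]
    by (intro continuous_intros) (auto simp: add_pos_pos less_imp_neq[symmetric])
  then have "(\<lambda>t. indicator {0<..} t *\<^sub>R ?U t) \<in> borel_measurable lborel"
    using borel_measurable_continuous_on_indicator[of "{0<..}" ?U] by simp
  moreover have "integrable lborel (\<lambda>t. indicator {0<..} t *\<^sub>R ?g t)"
    using tau_prior_kernel_integrable[OF assms(1-3)] unfolding set_integrable_def[symmetric]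
    by (intro set_integrable_mult_left set_integrable_divide)
  moreover have "AE t in lborel. norm (indicator {0<..} t *\<^sub>R ?U t) \<le> norm (indicator {0<..} t *\<^sub>R ?g t)"
    using tau_unnorm_le[OF assms] tau_unnorm_nonneg[OF assms(1-3) mem_lambda_box_pos[OF assms(4) lam]]
      C_const_pos[OF assms(1-3)] tau_prior_kernel_nonneg
    by (auto simp: indicator_def)
  ultimately show ?thesis
    unfolding set_integrable_def by (rule_tac Bochner_Integration.integrable_bound) auto
qed

lemma tau_normaliser_le:
  fixes lam :: "real^'p"
  assumes "0 < a" and "0 < b" and "0 < c" and "0 < L" and "lam \<in> cbox (\<chi> k. 1 / L) (\<chi> k. L)"
  shows "(LINT t:{0<..}|lborel. tau_unnorm a b c lam t) \<le> max L 1 ^ CARD('p)"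
proof -
  have "(LINT t:{0<..}|lborel. tau_unnorm a b c lam t)
      \<le> (LINT t:{0<..}|lborel. tau_prior_kernel a b c t / C_const a b c * max L 1 ^ CARD('p))"
    using tau_unnorm_integrable[OF assms] tau_prior_kernel_integrable[OF assms(1-3)] tau_unnorm_le[OF assms]
    by (intro set_integral_mono set_integrable_mult_left set_integrable_divide) auto
  also have "\<dots> = max L 1 ^ CARD('p)"
    using C_const_pos[OF assms(1-3)] by (simp add: C_const_def tau_prior_kernel_def)
  finally show ?thesis .
qed

lemma tau_density_nonneg:
  assumes "0 < a" and "0 < b" and "0 < c" and "\<forall>k. 0 < lam $ k"
  shows "0 \<le> tau_density a b c lam t"
proof -
  have "0 \<le> (LINT s:{0<..}|lborel. tau_unnorm a b c lam s)"
    unfolding set_lebesgue_integral_def using tau_unnorm_nonneg[OF assms]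
    by (intro Bochner_Integration.integral_nonneg) (auto simp: indicator_def)
  then show ?thesis unfolding tau_density_def using tau_unnorm_nonneg[OF assms] by simp
qed

lemma tau_density_uniform_lower:
  assumes "0 < a" and "0 < b" and "0 < c" and "0 < L"
  shows "\<exists>K>0. \<forall>lam :: real^'p \<in> cbox (\<chi> k. 1 / L) (\<chi> k. L). \<forall>t\<in>{1..2}. K \<le> tau_density a b c lam t"
proof -
  define m where "m = min 1 (2 powr (a - 1)) * (c + 2) powr (- (a + b)) / C_const a b c
    * (1 / (L + 2)) ^ CARD('p)"
  have "0 < m" unfolding m_def using assms C_const_pos[OF assms(1-3)] by simp
  have "m / max L 1 ^ CARD('p) \<le> tau_density a b c lam t"
    if lam: "lam \<in> cbox (\<chi> k. 1 / L) (\<chi> k. L)" and t: "t \<in> {1..2}" for lam :: "real^'p" and t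
  proof -
    let ?I = "LINT s:{0<..}|lborel. tau_unnorm a b c lam s"
    have U_ge: "m \<le> tau_unnorm a b c lam t" if "t \<in> {1..2}" for t
      unfolding m_def by (rule tau_unnorm_ge[OF assms lam that])
    have "m \<le> ?I"
      using tau_unnorm_nonneg[OF assms(1-3) mem_lambda_box_pos[OF assms(4) lam]] U_ge
      by (intro set_integral_Ioi_ge tau_unnorm_integrable[OF assms lam]) auto
    then have "m / max L 1 ^ CARD('p) \<le> m / ?I"
      using \<open>0 < m\<close> tau_normaliser_le[OF assms lam] by (intro divide_left_mono) auto
    also have "\<dots> \<le> tau_unnorm a b c lam t / ?I"
      using \<open>0 < m\<close> \<open>m \<le> ?I\<close> U_ge[OF t] by (intro divide_right_mono) auto
    finally show ?thesis unfolding tau_density_def using t by simp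
  qed
  moreover have "0 < m / max L 1 ^ CARD('p)" using \<open>0 < m\<close> by simp
  ultimately show ?thesis by blast
qed

subsection \<open>The inverse gamma factors\<close>

lemma ig_density_nonneg: "0 < \<alpha> \<Longrightarrow> 0 \<le> ig_density \<alpha> r x"
  unfolding ig_density_def by simp

lemma ig_density_ge:
  assumes "0 < \<alpha>" and "0 < r\<^sub>0" and "r \<in> {r\<^sub>0..r\<^sub>1}" and "x \<in> {1..2}"
  shows "r\<^sub>0 powr \<alpha> * 2 powr (- \<alpha> - 1) * exp (- r\<^sub>1) / Gamma \<alpha> \<le> ig_density \<alpha> r x"
proof -
  have "r\<^sub>0 powr \<alpha> \<le> r powr \<alpha>" using assms by (intro powr_mono2) auto
  moreover have "2 powr (- \<alpha> - 1) \<le> x powr (- \<alpha> - 1)" using assms by (intro powr_mono2') auto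
  moreover have "r / x \<le> r\<^sub>1"
    using assms by (auto simp: divide_le_eq intro: order_trans[OF _ mult_left_mono[of 1 x r\<^sub>1]])
  ultimately have "r\<^sub>0 powr \<alpha> * 2 powr (- \<alpha> - 1) * exp (- r\<^sub>1) \<le> r powr \<alpha> * x powr (- \<alpha> - 1) * exp (- r / x)"
    by (intro mult_mono) auto
  then show ?thesis unfolding ig_density_def using assms by (simp add: divide_right_mono)
qed

lemma prod_ig_density_nu_ge:
  fixes lam \<nu> :: "real^'p"
  assumes "0 < L" and lam: "lam \<in> cbox (\<chi> k. 1 / L) (\<chi> k. L)"
    and \<nu>: "\<nu> \<in> cbox (\<chi> k. 1) (\<chi> k. 2)" and t: "t \<in> {1..2}"
  shows "(2 powr - 2 * exp (- (1 + 2 * L))) ^ CARD('p) \<le> (\<Prod>k\<in>UNIV. ig_density 1 (1 + t / lam $ k) (\<nu> $ k))"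
proof -
  have "2 powr - 2 * exp (- (1 + 2 * L)) \<le> ig_density 1 (1 + t / lam $ k) (\<nu> $ k)" for k
  proof -
    have "0 < lam $ k" "1 / L \<le> lam $ k"
      using lam mem_lambda_box_pos[OF assms(1) lam] by (auto simp: mem_box_cart)
    then have "t / lam $ k \<le> 2 * L"
      using t \<open>0 < L\<close> by (auto simp: divide_le_eq field_simps intro: order_trans[of _ 2])
    then show ?thesis
      using ig_density_ge[of 1 1 "1 + t / lam $ k" "1 + 2 * L" "\<nu> $ k"] \<nu> t \<open>0 < lam $ k\<close>
      by (simp add: mem_box_cart)
  qed
  then have "(\<Prod>k\<in>(UNIV :: 'p set). 2 powr - 2 * exp (- (1 + 2 * L)))
      \<le> (\<Prod>k\<in>UNIV. ig_density 1 (1 + t / lam $ k) (\<nu> $ k))"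
    by (intro prod_mono) simp
  then show ?thesis by simp
qed

definition cube :: "((real^'p) \<times> real \<times> (real^'p) \<times> real) set" where
  "cube = cbox (0, 1, \<chi> k. 1, 1) (\<chi> k. 1, 2, \<chi> k. 2, 2)"

lemma mem_cube:
  "(\<beta>, s, \<nu>, t) \<in> cube \<longleftrightarrow>
    \<beta> \<in> cbox 0 (\<chi> k. 1) \<and> s \<in> {1..2} \<and> \<nu> \<in> cbox (\<chi> k. 1) (\<chi> k. 2) \<and> t \<in> {1..2}"
  by (simp add: cube_def cbox_Pair_eq)

lemma emeasure_cube: "emeasure lborel cube = 1"
proof -
  have "measure lborel cube = 1"
    by (simp add: cube_def content_Pair content_cbox_if_cart box_ne_empty Basis_vec_def inner_axis)
  then show ?thesis by (simp add: cube_def emeasure_eq_measure2 emeasure_lborel_cbox_finite)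
qed

lemma is_prob_density_indicator_cube: "is_prob_density (indicator cube)"
  unfolding is_prob_density_def
proof (intro conjI allI impI)
  show "indicator cube \<in> borel_measurable lborel" by (simp add: cube_def)
  have "cube \<in> sets lborel" by (simp add: cube_def)
  then show "(\<integral>\<^sup>+ z. ennreal (indicator cube z) \<partial>lborel) = 1"
    using nn_integral_indicator[of cube lborel] by (simp add: ennreal_indicator emeasure_cube)
  have "cube \<subseteq> state_domain"
    by (clarsimp simp: mem_cube state_domain_def mem_box_cart) (meson less_le_trans zero_less_one)
  then show "indicator cube z = 0" if "z \<notin> state_domain" for z
    using that by (auto simp: indicator_def)
qed simp

lemma step1_density_nonneg:
  assumes "0 < a'" and "0 < a" and "0 < b" and "0 < c" and "\<forall>k. 0 < lam $ k"
  shows "0 \<le> step1_density y X a' b' a b c lam z"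
  unfolding step1_density_def step1_dens_def using assms
  by (intro mult_nonneg_nonneg prod_nonneg ig_density_nonneg tau_density_nonneg)
     (auto simp: mvn_density_nonneg)

lemma step1_density_uniform_lower_on_cube:
  fixes y :: "real^'n" and X :: "real^'p^'n"
  assumes "0 < a'" and "0 < b'" and "0 < a" and "0 < b" and "0 < c" and "0 < L"
  shows "\<exists>\<epsilon>>0. \<forall>lam \<in> cbox (\<chi> k. 1 / L) (\<chi> k. L). \<forall>z\<in>cube.
    \<epsilon> \<le> step1_density y X a' b' a b c lam z"
proof -
  define \<alpha> where "\<alpha> = real CARD('n) / 2 + a'"
  have "0 < \<alpha>" unfolding \<alpha>_def using assms by simp
  define K\<^sub>\<sigma> where "K\<^sub>\<sigma> = b' powr \<alpha> * 2 powr (- \<alpha> - 1) * exp (- (y \<bullet> y / 2 + b')) / Gamma \<alpha>"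
  obtain K\<^sub>\<beta> where K\<^sub>\<beta>: "K\<^sub>\<beta> > 0" "\<forall>lam \<in> cbox (\<chi> k. 1 / L) (\<chi> k. L). \<forall>\<beta> \<in> cbox 0 (\<chi> k. 1).
      \<forall>s\<in>{1..2}. K\<^sub>\<beta> \<le> mvn_density (post_mean y X lam) (s *\<^sub>R matrix_inv (precision X lam)) \<beta>"
    using mvn_density_uniform_lower[OF assms(6)] by blast
  obtain K\<^sub>\<tau> where K\<^sub>\<tau>: "K\<^sub>\<tau> > 0"
      "\<forall>lam :: real^'p \<in> cbox (\<chi> k. 1 / L) (\<chi> k. L). \<forall>t\<in>{1..2}. K\<^sub>\<tau> \<le> tau_density a b c lam t"
    using tau_density_uniform_lower[OF assms(3-6)] by blast
  define K\<^sub>\<nu> where "K\<^sub>\<nu> = (2 powr - 2 * exp (- (1 + 2 * L))) ^ CARD('p)"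
  have "K\<^sub>\<sigma> * K\<^sub>\<beta> * K\<^sub>\<tau> * K\<^sub>\<nu> \<le> step1_density y X a' b' a b c lam (\<beta>, s, \<nu>, t)"
    if lam: "lam \<in> cbox (\<chi> k. 1 / L) (\<chi> k. L)" and "(\<beta>, s, \<nu>, t) \<in> cube" for lam \<beta> s \<nu> t
  proof -
    have pos: "\<forall>k. 0 < lam $ k" by (rule mem_lambda_box_pos[OF assms(6) lam])
    have z: "\<beta> \<in> cbox 0 (\<chi> k. 1)" "s \<in> {1..2}" "\<nu> \<in> cbox (\<chi> k. 1) (\<chi> k. 2)" "t \<in> {1..2}"
      using \<open>(\<beta>, s, \<nu>, t) \<in> cube\<close> by (simp_all add: mem_cube)
    have "K\<^sub>\<sigma> \<le> ig_density \<alpha> (sigma_rate y X b' lam) s"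
      unfolding K\<^sub>\<sigma>_def using sigma_rate_bounds[OF pos] z(2) \<open>0 < \<alpha>\<close> assms(2)
      by (intro ig_density_ge) auto
    moreover have "K\<^sub>\<nu> \<le> (\<Prod>k\<in>UNIV. ig_density 1 (1 + t / lam $ k) (\<nu> $ k))"
      unfolding K\<^sub>\<nu>_def by (rule prod_ig_density_nu_ge[OF assms(6) lam z(3,4)])
    moreover have "0 \<le> K\<^sub>\<sigma>" "0 \<le> K\<^sub>\<nu>" unfolding K\<^sub>\<sigma>_def K\<^sub>\<nu>_def using \<open>0 < \<alpha>\<close> by simp_all
    ultimately show ?thesis
      unfolding step1_density_def step1_dens_def \<alpha>_def[symmetric] using K\<^sub>\<beta> K\<^sub>\<tau> lam z
      by (auto intro!: mult_mono mult_nonneg_nonneg tau_density_nonneg[OF assms(3-5) pos]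
          mvn_density_nonneg)
  qed
  moreover have "0 < K\<^sub>\<sigma> * K\<^sub>\<beta> * K\<^sub>\<tau> * K\<^sub>\<nu>"
    unfolding K\<^sub>\<sigma>_def K\<^sub>\<nu>_def using \<open>0 < \<alpha>\<close> assms K\<^sub>\<beta>(1) K\<^sub>\<tau>(1) by simp
  ultimately show ?thesis by (metis prod_cases4)
qed

theorem mainTheorem5:
  fixes y :: "real^'n" and X :: "real^'p^'n"
    and a' b' a b c L :: real
  assumes "invertible (transpose X ** X)"
    and "0 < a'" and "0 < b'" and "0 < a" and "0 < b" and "0 < c"
    and "0 < L"
  shows "\<exists>q \<epsilon>. is_prob_density q \<and> 0 < \<epsilon> \<and>
     (\<forall>lam :: real^'p. (\<forall>k. 1 / L \<le> lam $ k \<and> lam $ k \<le> L) \<longrightarrow>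
        (\<forall>z. step1_density y X a' b' a b c lam z \<ge> \<epsilon> * q z))"
proof -
  obtain \<epsilon> where "0 < \<epsilon>"
    and lower: "\<forall>lam \<in> cbox (\<chi> k. 1 / L) (\<chi> k. L). \<forall>z\<in>cube. \<epsilon> \<le> step1_density y X a' b' a b c lam z"
    using step1_density_uniform_lower_on_cube[OF assms(2-7)] by blast
  have "\<epsilon> * indicator cube z \<le> step1_density y X a' b' a b c lam z"
    if "\<forall>k. 1 / L \<le> lam $ k \<and> lam $ k \<le> L" for lam :: "real^'p" and z
  proof -
    have lam: "lam \<in> cbox (\<chi> k. 1 / L) (\<chi> k. L)" using that by (simp add: mem_box_cart)
    have "0 \<le> step1_density y X a' b' a b c lam z"
      by (rule step1_density_nonneg[OF assms(2,4-6) mem_lambda_box_pos[OF assms(7) lam]])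
    then show ?thesis using lower lam by (cases "z \<in> cube") auto
  qed
  then show ?thesis using is_prob_density_indicator_cube \<open>0 < \<epsilon>\<close> by blast
qed

end
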